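(* Fix $\theta>0$ and let $n\to\infty$ along integers for which $m=\theta n$ is an integer. If $\mathbf s$ is uniform on $\Phi^*_{m,n}$, then $$\mathbb E\left(\prod_{\nu=1}^m(s_\nu+1)\right)\sim\left(\frac{2(\theta+1)}{2\theta+1}\right)^{1/2}\left[\frac{(2\theta+1)^{2\theta+1}}{(4\theta)^\theta(\theta+1)^{\theta+1}}\right]^n .$$ In particular, for $\theta=1$ this is $\sim(4/3)^{1/2}(27/16)^n$.
   Context: $\Phi^*_{m,n}$ is the set of arrays $\mathbf s=(s_1,\dots,s_m)$ of nonnegative integers with $s_1+\dots+s_m=n$. $f\sim g$ means $f/g\to1$. *)

theory Defs
  imports "HOL-Probability.Probability" "HOL-Library.Landau_Symbols"
begin

definition Phi_star :: "nat \<Rightarrow> nat \<Rightarrow> (nat \<Rightarrow> nat) set" where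
  "Phi_star m n = {s. (\<forall>i. i \<notin> {1..m} \<longrightarrow> s i = 0) \<and> (\<Sum>i=1..m. s i) = n}"

definition E_prod :: "nat \<Rightarrow> nat \<Rightarrow> real" where
  "E_prod m n = measure_pmf.expectation (pmf_of_set (Phi_star m n))
      (\<lambda>s. \<Prod>\<nu>=1..m. real (s \<nu> + 1))"

end

theory Submission
  imports Defs "HOL-Real_Asymp.Real_Asymp"
begin

text \<open>
  Removing the last coordinate gives a convolution recursion: the sum of
  \<open>\<Prod>\<nu>. s \<nu> + 1\<close> over \<open>Phi_star m n\<close> is the coefficient of \<open>x ^ n\<close> in
  \<open>(1 - x) ^ (-2m)\<close> and \<open>card (Phi_star m n)\<close> is that of \<open>(1 - x) ^ (-m)\<close>, so the
  expectation is \<open>(n+2m-1 choose n) / (n+m-1 choose n)\<close>, two factorials over two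
  factorials. Stirling's formula is therefore only needed up to a constant,
  \<open>k! \<sim> c * sqrt k * (k / e) ^ k\<close>: the unknown \<open>c\<close> cancels. This weak form follows
  because the increments of \<open>ln (k! / (sqrt k * (k / e) ^ k))\<close> are \<open>O(1 / k\<^sup>2)\<close>.
  For \<open>m = \<theta> n\<close> the four main terms combine exactly into the stated expression.
\<close>

lemma Phi_star_Suc_0: "Phi_star (Suc 0) n = {(\<lambda>i. if i = 1 then n else 0)}"
  unfolding Phi_star_def by auto

lemma Phi_star_Suc:
  "Phi_star (Suc m) n = (\<lambda>(k, t). t(Suc m := k)) ` (SIGMA k:{..n}. Phi_star m (n - k))"
proof (intro equalityI subsetI)
  fix s assume s: "s \<in> Phi_star (Suc m) n"
  have "(\<Sum>i=1..m. s i) + s (Suc m) = n"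
    using s by (simp add: Phi_star_def)
  moreover have "(\<Sum>i=1..m. (s(Suc m := 0)) i) = (\<Sum>i=1..m. s i)"
    by (rule sum.cong) auto
  ultimately have "(s (Suc m), s(Suc m := 0)) \<in> (SIGMA k:{..n}. Phi_star m (n - k))"
    using s by (auto simp: Phi_star_def)
  then show "s \<in> (\<lambda>(k, t). t(Suc m := k)) ` (SIGMA k:{..n}. Phi_star m (n - k))"
    by (rule rev_image_eqI) simp
next
  fix s assume "s \<in> (\<lambda>(k, t). t(Suc m := k)) ` (SIGMA k:{..n}. Phi_star m (n - k))"
  then obtain k t where k: "k \<le> n" and t: "t \<in> Phi_star m (n - k)" and s: "s = t(Suc m := k)"
    by auto
  have "(\<Sum>i=1..m. (t(Suc m := k)) i) = (\<Sum>i=1..m. t i)"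
    by (rule sum.cong) auto
  then show "s \<in> Phi_star (Suc m) n"
    using k t by (auto simp: Phi_star_def s)
qed

lemma inj_on_Phi_star_Suc:
  "inj_on (\<lambda>(k, t). t(Suc m := k)) (SIGMA k:{..n}. Phi_star m (n - k))"
proof (rule inj_onI, clarsimp)
  fix k t k' t'
  assume t: "t \<in> Phi_star m (n - k)" and t': "t' \<in> Phi_star m (n - k')"
    and eq: "t(Suc m := k) = t'(Suc m := k')"
  have "t (Suc m) = 0" "t' (Suc m) = 0"
    using t t' by (auto simp: Phi_star_def)
  then show "k = k' \<and> t = t'"
    using eq by (metis fun_upd_same fun_upd_upd fun_upd_triv)
qed

lemma finite_Phi_star: "finite (Phi_star m n)"
proof (induction m arbitrary: n)
  case 0
  have "Phi_star 0 n \<subseteq> {\<lambda>_. 0}"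
    by (auto simp: Phi_star_def)
  then show ?case
    by (rule finite_subset) simp
next
  case (Suc m)
  then show ?case
    by (simp add: Phi_star_Suc)
qed

lemma sum_prod_Phi_star_Suc:
  fixes w :: "nat \<Rightarrow> 'a::comm_semiring_1"
  shows "(\<Sum>s\<in>Phi_star (Suc m) n. \<Prod>\<nu>=1..Suc m. w (s \<nu>)) =
         (\<Sum>k\<le>n. w k * (\<Sum>t\<in>Phi_star m (n - k). \<Prod>\<nu>=1..m. w (t \<nu>)))"
proof -
  have prod: "(\<Prod>\<nu>=1..Suc m. w ((t(Suc m := k)) \<nu>)) = w k * (\<Prod>\<nu>=1..m. w (t \<nu>))" for t k
  proof -
    have "(\<Prod>\<nu>=1..m. w ((t(Suc m := k)) \<nu>)) = (\<Prod>\<nu>=1..m. w (t \<nu>))"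
      by (rule prod.cong) auto
    then show ?thesis
      by (simp add: mult.commute)
  qed
  have "(\<Sum>s\<in>Phi_star (Suc m) n. \<Prod>\<nu>=1..Suc m. w (s \<nu>)) =
        (\<Sum>(k, t)\<in>(SIGMA k:{..n}. Phi_star m (n - k)). \<Prod>\<nu>=1..Suc m. w ((t(Suc m := k)) \<nu>))"
    unfolding Phi_star_Suc by (rule sum.reindex_cong[OF inj_on_Phi_star_Suc]) auto
  also have "\<dots> = (\<Sum>(k, t)\<in>(SIGMA k:{..n}. Phi_star m (n - k)). w k * (\<Prod>\<nu>=1..m. w (t \<nu>)))"
    by (simp only: prod)
  finally show ?thesis
    by (simp add: sum.Sigma finite_Phi_star sum_distrib_left)
qed

lemma card_Phi_star_Suc: "card (Phi_star (Suc m) n) = (n + m choose n)"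
proof (induction m arbitrary: n)
  case 0
  then show ?case
    by (simp add: Phi_star_Suc_0)
next
  case (Suc m)
  have "card (Phi_star (Suc (Suc m)) n) = (\<Sum>k\<le>n. (n - k + m choose (n - k)))"
    using sum_prod_Phi_star_Suc[of "\<lambda>_. 1 :: nat" "Suc m" n] by (simp add: Suc)
  also have "\<dots> = (\<Sum>k\<le>n. (m + k choose k))"
    by (rule sum.reindex_bij_witness[of _ "\<lambda>k. n - k" "\<lambda>k. n - k"]) (auto simp: add.commute)
  also have "\<dots> = n + Suc m choose n"
    using sum_choose_lower[of m n] by (simp add: add.commute)
  finally show ?case .
qed

lemma sum_Suc_mult_choose:
  "(\<Sum>k\<le>n. (k + 1) * (n - k + r choose (n - k))) = (n + r + 2 choose n)"
proof -
  have "(\<Sum>k\<le>n. (k + 1) * (n - k + r choose (n - k))) = (\<Sum>j\<le>n. (n + 1 - j) * (j + r choose j))"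
    by (rule sum.reindex_bij_witness[of _ "\<lambda>k. n - k" "\<lambda>k. n - k"]) auto
  also have "\<dots> = (n + r + 2 choose n)"
  proof (induction n)
    case 0
    then show ?case by simp
  next
    case (Suc n)
    have cong: "(\<Sum>j\<le>n. (Suc n + 1 - j) * (j + r choose j)) =
          (\<Sum>j\<le>n. (n + 1 - j) * (j + r choose j) + (j + r choose j))"
      by (rule sum.cong) (auto simp: Suc_diff_le)
    have lower: "(\<Sum>j\<le>n. (j + r choose j)) = Suc (r + n) choose n"
      using sum_choose_lower[of r n] by (simp add: add.commute)
    have "(\<Sum>j\<le>Suc n. (Suc n + 1 - j) * (j + r choose j)) =
          (\<Sum>j\<le>n. (Suc n + 1 - j) * (j + r choose j)) + (Suc n + r choose Suc n)"
      by simp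
    also have "\<dots> = (n + r + 2 choose n) + (Suc (r + n) choose n) + (Suc n + r choose Suc n)"
      by (simp only: cong sum.distrib Suc.IH lower)
    also have "\<dots> = Suc n + r + 2 choose Suc n"
      by (simp add: algebra_simps numeral_2_eq_2)
    finally show ?case .
  qed
  finally show ?thesis .
qed

lemma sum_prod_Suc_Phi_star_Suc:
  "(\<Sum>s\<in>Phi_star (Suc m) n. \<Prod>\<nu>=1..Suc m. s \<nu> + 1) = (n + 2 * m + 1 choose n)"
proof (induction m arbitrary: n)
  case 0
  then show ?case
    by (simp add: Phi_star_Suc_0)
next
  case (Suc m)
  have "(\<Sum>s\<in>Phi_star (Suc (Suc m)) n. \<Prod>\<nu>=1..Suc (Suc m). s \<nu> + 1) =
        (\<Sum>k\<le>n. (k + 1) * (n - k + 2 * m + 1 choose (n - k)))"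
    by (simp only: sum_prod_Phi_star_Suc[of "\<lambda>j. j + 1" "Suc m" n] Suc)
  also have "\<dots> = n + 2 * Suc m + 1 choose n"
    using sum_Suc_mult_choose[of n "2 * m + 1"] by (simp add: add.assoc)
  finally show ?case .
qed

lemma E_prod_Suc: "E_prod (Suc m) n = real (n + 2 * m + 1 choose n) / real (n + m choose n)"
proof -
  have "card (Phi_star (Suc m) n) \<noteq> 0"
    by (simp add: card_Phi_star_Suc)
  then have "Phi_star (Suc m) n \<noteq> {}"
    by auto
  then have "E_prod (Suc m) n =
      (\<Sum>s\<in>Phi_star (Suc m) n. \<Prod>\<nu>=1..Suc m. real (s \<nu> + 1)) / card (Phi_star (Suc m) n)"
    unfolding E_prod_def by (rule integral_pmf_of_set[OF _ finite_Phi_star])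
  then show ?thesis
    by (simp only: of_nat_prod[symmetric] of_nat_sum[symmetric] sum_prod_Suc_Phi_star_Suc card_Phi_star_Suc)
qed

lemma E_prod_eq_fact_quotient:
  assumes "m \<ge> 1"
  shows "E_prod m n = fact (n + 2 * m) * fact m / (fact (2 * m) * fact (n + m)) *
           (real (2 * m) * real (n + m) / (real (n + 2 * m) * real m))"
proof -
  have choose_pred: "real (N - 1 choose n) = real (N - n) / real N * real (N choose n)"
    if "n < N" for N
  proof -
    have "real (N - n) * real (N choose n) = real N * real (N - 1 choose n)"
      by (simp only: binomial_absorb_comp flip: of_nat_mult)
    then show ?thesis
      using that by (simp add: field_simps)
  qed
  obtain m' where m: "m = Suc m'"
    using assms by (cases m) auto
  have "E_prod m n = real (n + 2 * m - 1 choose n) / real (n + m - 1 choose n)"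
    by (simp add: m E_prod_Suc)
  also have "real (n + 2 * m - 1 choose n) = real (2 * m) / real (n + 2 * m) * real (n + 2 * m choose n)"
    using choose_pred[of "n + 2 * m"] assms by simp
  also have "real (n + m - 1 choose n) = real m / real (n + m) * real (n + m choose n)"
    using choose_pred[of "n + m"] assms by simp
  also have "real (2 * m) / real (n + 2 * m) * real (n + 2 * m choose n) /
               (real m / real (n + m) * real (n + m choose n)) =
             real (n + 2 * m choose n) / real (n + m choose n) *
               (real (2 * m) * real (n + m) / (real (n + 2 * m) * real m))"
    using assms by (simp add: field_simps)
  also have "real (n + 2 * m choose n) / real (n + m choose n) =
             fact (n + 2 * m) * fact m / (fact (2 * m) * fact (n + m))"
    by (simp add: binomial_fact field_simps)
  finally show ?thesis .
qed

lemma convergent_if_summable_diffs: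
  fixes f :: "nat \<Rightarrow> 'a::banach"
  assumes "summable (\<lambda>k. f (Suc k) - f k)"
  shows "convergent f"
proof -
  have "(\<lambda>n. f 0 + (\<Sum>k<n. f (Suc k) - f k)) \<longlonglongrightarrow> f 0 + suminf (\<lambda>k. f (Suc k) - f k)"
    by (intro tendsto_add tendsto_const summable_LIMSEQ assms)
  then show ?thesis
    by (auto simp: convergent_def sum_lessThan_telescope)
qed

definition stirling_main :: "real \<Rightarrow> real" where
  "stirling_main x = sqrt x * (x / exp 1) powr x"

lemma fact_asymp_equiv_stirling_main:
  obtains c :: real where "c > 0" "(\<lambda>k. fact k) \<sim>[sequentially] (\<lambda>k. c * stirling_main (real k))"
proof -
  define d where "d k = ln (fact k) - (real k + 1/2) * ln (real k) + real k" for k :: nat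
  have diff: "d (Suc k) - d k = 1 - (real k + 1/2) * (ln (real k + 1) - ln (real k))" for k
  proof -
    have "ln (fact (Suc k) :: real) = ln (real k + 1) + ln (fact k)"
      using ln_mult[of "real k + 1" "fact k"] by (simp add: algebra_simps)
    then show ?thesis
      by (simp add: d_def algebra_simps)
  qed
  have "(\<lambda>x::real. 1 - (x + 1/2) * (ln (x + 1) - ln x)) \<in> O(\<lambda>x. 1 / x^2)"
    by real_asymp
  then have bigo: "(\<lambda>k. d (Suc k) - d k) \<in> O(\<lambda>k. 1 / real k ^ 2)"
    unfolding diff by (rule bigo_real_nat_transfer)
  have "summable (\<lambda>k. norm (1 / real k ^ 2))"
    using inverse_power_summable[of 2] by (simp add: inverse_eq_divide)
  then have "convergent d"
    by (rule convergent_if_summable_diffs[OF summable_comparison_test_bigo[OF _ bigo]])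
  then obtain L where L: "d \<longlonglongrightarrow> L"
    by (auto simp: convergent_def)
  have "exp (d k) = fact k / stirling_main (real k)" if "k \<ge> 1" for k
  proof -
    have "fact k / stirling_main (real k) > 0"
      using that by (simp add: stirling_main_def)
    moreover have "ln (fact k / stirling_main (real k)) = d k"
      using that by (simp add: d_def stirling_main_def ln_div ln_mult ln_sqrt algebra_simps)
    ultimately show ?thesis
      by (metis exp_ln)
  qed
  then have "eventually (\<lambda>k. exp (d k) = fact k / stirling_main (real k)) sequentially"
    by (intro eventually_mono[OF eventually_ge_at_top[of 1]])
  with tendsto_exp[OF L] have "((\<lambda>k. fact k / stirling_main (real k)) \<longlongrightarrow> exp L) sequentially"
    by (rule Lim_transform_eventually)
  then show ?thesis
    by (intro that[of "exp L"] asymp_equivI'_const) auto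
qed

lemma fact_quotient_asymp_equiv:
  assumes "filterlim a at_top F" "filterlim b at_top F" "filterlim c at_top F" "filterlim d at_top F"
  shows "(\<lambda>x. fact (a x) * fact (b x) / (fact (c x) * fact (d x)) :: real) \<sim>[F]
         (\<lambda>x. stirling_main (a x) * stirling_main (b x) / (stirling_main (c x) * stirling_main (d x)))"
proof -
  obtain C :: real where "C > 0" and C: "(\<lambda>k. fact k) \<sim>[sequentially] (\<lambda>k. C * stirling_main (real k))"
    by (rule fact_asymp_equiv_stirling_main)
  have "(\<lambda>x. fact (a x) * fact (b x) / (fact (c x) * fact (d x)) :: real) \<sim>[F]
        (\<lambda>x. C * stirling_main (a x) * (C * stirling_main (b x)) /
              (C * stirling_main (c x) * (C * stirling_main (d x))))"
    by (intro asymp_equiv_intros asymp_equiv_compose'[OF C] assms)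
  also have "(\<lambda>x. C * stirling_main (a x) * (C * stirling_main (b x)) /
              (C * stirling_main (c x) * (C * stirling_main (d x)))) =
        (\<lambda>x. stirling_main (a x) * stirling_main (b x) / (stirling_main (c x) * stirling_main (d x)))"
    using \<open>C > 0\<close> by (simp add: fun_eq_iff)
  finally show ?thesis .
qed

lemma stirling_main_scale:
  assumes "x > 0" "a > 0"
  shows "stirling_main (a * x) = sqrt a * (a powr a) powr x * sqrt x * ((x / exp 1) powr x) powr a"
proof -
  have "(a * x / exp 1) powr (a * x) = a powr (a * x) * (x / exp 1) powr (a * x)"
    using powr_mult[of a "x / exp 1" "a * x"] assms by simp
  also have "\<dots> = (a powr a) powr x * ((x / exp 1) powr x) powr a"
    by (simp add: powr_powr mult.commute)
  finally show ?thesis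
    using assms by (simp add: stirling_main_def real_sqrt_mult)
qed

lemma stirling_main_quotient:
  assumes "x > 0" "a1 > 0" "a2 > 0" "a3 > 0" "a4 > 0" "a1 + a2 = a3 + a4"
  shows "stirling_main (a1 * x) * stirling_main (a2 * x) / (stirling_main (a3 * x) * stirling_main (a4 * x))
       = sqrt (a1 * a2 / (a3 * a4)) * (a1 powr a1 * a2 powr a2 / (a3 powr a3 * a4 powr a4)) powr x"
proof -
  define P where "P = (x / exp 1) powr x"
  have "P powr a1 * P powr a2 = P powr a3 * P powr a4"
    by (simp add: powr_add[symmetric] assms(6))
  moreover have "P > 0"
    using assms by (simp add: P_def)
  ultimately show ?thesis
    using assms
    unfolding stirling_main_scale[OF assms(1,2)] stirling_main_scale[OF assms(1,3)]
      stirling_main_scale[OF assms(1,4)] stirling_main_scale[OF assms(1,5)] P_def[symmetric]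
    by (simp add: real_sqrt_divide real_sqrt_mult powr_mult powr_divide field_simps)
qed

lemma stirling_main_quotient_theta:
  fixes \<theta> x :: real
  assumes "\<theta> > 0" "x > 0"
  shows "stirling_main ((1 + 2 * \<theta>) * x) * stirling_main (\<theta> * x) /
           (stirling_main ((2 * \<theta>) * x) * stirling_main ((1 + \<theta>) * x)) *
           ((2 * \<theta>) * x * ((1 + \<theta>) * x) / ((1 + 2 * \<theta>) * x * (\<theta> * x)))
       = sqrt (2 * (\<theta> + 1) / (2 * \<theta> + 1)) *
           ((2 * \<theta> + 1) powr (2 * \<theta> + 1) / ((4 * \<theta>) powr \<theta> * (\<theta> + 1) powr (\<theta> + 1))) powr x"
proof -
  define r where "r = 2 * (\<theta> + 1) / (2 * \<theta> + 1)"
  have "r > 0"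
    using assms by (simp add: r_def)
  have "(2 * \<theta>) powr (2 * \<theta>) = ((2 * \<theta>) powr 2) powr \<theta>"
    by (simp add: powr_powr mult.commute)
  also have "\<dots> = (4 * \<theta>) powr \<theta> * \<theta> powr \<theta>"
    using assms by (simp add: power2_eq_square powr_mult[symmetric] mult.assoc)
  finally have base: "(2 * \<theta>) powr (2 * \<theta>) = (4 * \<theta>) powr \<theta> * \<theta> powr \<theta>" .
  have "stirling_main ((1 + 2 * \<theta>) * x) * stirling_main (\<theta> * x) /
          (stirling_main ((2 * \<theta>) * x) * stirling_main ((1 + \<theta>) * x)) =
        sqrt ((1 + 2 * \<theta>) * \<theta> / ((2 * \<theta>) * (1 + \<theta>))) *
          ((1 + 2 * \<theta>) powr (1 + 2 * \<theta>) * \<theta> powr \<theta> /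
           ((2 * \<theta>) powr (2 * \<theta>) * (1 + \<theta>) powr (1 + \<theta>))) powr x"
    by (rule stirling_main_quotient) (use assms in auto)
  also have "(1 + 2 * \<theta>) * \<theta> / ((2 * \<theta>) * (1 + \<theta>)) = inverse r"
    using assms by (simp add: r_def divide_simps) (simp add: algebra_simps)
  also have "(1 + 2 * \<theta>) powr (1 + 2 * \<theta>) * \<theta> powr \<theta> /
             ((2 * \<theta>) powr (2 * \<theta>) * (1 + \<theta>) powr (1 + \<theta>)) =
             (2 * \<theta> + 1) powr (2 * \<theta> + 1) / ((4 * \<theta>) powr \<theta> * (\<theta> + 1) powr (\<theta> + 1))"
    using assms by (simp add: base add.commute)
  finally have quotient: "stirling_main ((1 + 2 * \<theta>) * x) * stirling_main (\<theta> * x) /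
          (stirling_main ((2 * \<theta>) * x) * stirling_main ((1 + \<theta>) * x)) =
        sqrt (inverse r) * ((2 * \<theta> + 1) powr (2 * \<theta> + 1) / ((4 * \<theta>) powr \<theta> * (\<theta> + 1) powr (\<theta> + 1))) powr x" .
  have correction: "(2 * \<theta>) * x * ((1 + \<theta>) * x) / ((1 + 2 * \<theta>) * x * (\<theta> * x)) = r"
    using assms by (simp add: r_def divide_simps) (simp add: algebra_simps)
  have "sqrt (inverse r) * r = sqrt r"
    using real_div_sqrt[of r] \<open>r > 0\<close> by (simp add: real_sqrt_inverse divide_inverse mult.commute)
  then have "sqrt (inverse r) * K * r = sqrt r * K" for K
    by (metis mult.assoc mult.commute)
  then show ?thesis
    unfolding quotient correction r_def[symmetric] .
qed

lemma filterlim_nat_floor_mult_at_top: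
  assumes "\<theta> > 0"
  shows "filterlim (\<lambda>n::nat. nat \<lfloor>\<theta> * real n\<rfloor>) at_top sequentially"
  by (intro filterlim_compose[OF filterlim_nat_sequentially] filterlim_compose[OF filterlim_floor_sequentially]
      filterlim_tendsto_pos_mult_at_top[OF tendsto_const assms] filterlim_real_sequentially)

lemma E_prod_asymp_equiv:
  fixes \<theta> :: real
  assumes "\<theta> > 0"
  shows "(\<lambda>n::nat. E_prod (nat \<lfloor>\<theta> * real n\<rfloor>) n)
           \<sim>[sequentially \<sqinter> principal {n. \<theta> * real n \<in> \<int>}]
         (\<lambda>n. sqrt (2 * (\<theta> + 1) / (2 * \<theta> + 1)) *
              ((2 * \<theta> + 1) powr (2 * \<theta> + 1) /
               ((4 * \<theta>) powr \<theta> * (\<theta> + 1) powr (\<theta> + 1))) ^ n)"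
    (is "(\<lambda>n. E_prod (?M n) n) \<sim>[?F] (\<lambda>n. ?c * ?K ^ n)")
proof -
  define M where "M n = nat \<lfloor>\<theta> * real n\<rfloor>" for n
  define correction where "correction n = real (2 * M n) * real (n + M n) / (real (n + 2 * M n) * real (M n))" for n
  have M: "filterlim M at_top ?F"
    unfolding M_def by (rule filterlim_mono[OF filterlim_nat_floor_mult_at_top[OF assms] order_refl inf_le1])
  then have "eventually (\<lambda>n. M n \<ge> 1) ?F"
    by (simp add: filterlim_at_top)
  then have "(\<lambda>n. E_prod (?M n) n) \<sim>[?F]
      (\<lambda>n. fact (n + 2 * M n) * fact (M n) / (fact (2 * M n) * fact (n + M n)) * correction n)"
    by (intro asymp_equiv_refl_ev) (auto elim!: eventually_mono simp: E_prod_eq_fact_quotient M_def correction_def)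
  also have "\<dots> \<sim>[?F] (\<lambda>n. stirling_main (n + 2 * M n) * stirling_main (M n) /
        (stirling_main (2 * M n) * stirling_main (n + M n)) * correction n)"
    by (intro asymp_equiv_intros fact_quotient_asymp_equiv M filterlim_at_top_mono[OF M]) auto
  also have "\<dots> \<sim>[?F] (\<lambda>n. ?c * ?K ^ n)"
  proof (rule asymp_equiv_refl_ev)
    have "eventually (\<lambda>n. n \<ge> 1 \<and> \<theta> * real n \<in> \<int>) ?F"
      by (auto simp: eventually_inf_principal eventually_mono[OF eventually_ge_at_top[of 1]])
    then show "eventually (\<lambda>n. stirling_main (n + 2 * M n) * stirling_main (M n) /
        (stirling_main (2 * M n) * stirling_main (n + M n)) * correction n = ?c * ?K ^ n) ?F"
    proof (rule eventually_mono, safe elim!: Ints_cases)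
      fix n :: nat and z :: int
      assume n: "n \<ge> 1" and z: "\<theta> * real n = of_int z"
      have "0 \<le> real_of_int z"
        using assms by (simp flip: z)
      then have "real (M n) = \<theta> * real n"
        using z by (simp add: M_def)
      then have casts: "real (n + 2 * M n) = (1 + 2 * \<theta>) * real n" "real (2 * M n) = (2 * \<theta>) * real n"
          "real (n + M n) = (1 + \<theta>) * real n" "real (M n) = \<theta> * real n"
        by (simp_all add: algebra_simps)
      have "?K powr real n = ?K ^ n"
        using assms by (intro powr_realpow) simp
      then show "stirling_main (n + 2 * M n) * stirling_main (M n) /
        (stirling_main (2 * M n) * stirling_main (n + M n)) * correction n = ?c * ?K ^ n"
        unfolding correction_def casts
        using stirling_main_quotient_theta[OF assms, of "real n"] n by simp
    qed
  qed
  finally show ?thesis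
    unfolding M_def .
qed

theorem corollary2:
  fixes \<theta> :: real
  assumes "\<theta> > 0"
  shows "((\<lambda>n::nat. E_prod (nat \<lfloor>\<theta> * real n\<rfloor>) n)
           \<sim>[sequentially \<sqinter> principal {n. \<theta> * real n \<in> \<int>}]
         (\<lambda>n. sqrt (2 * (\<theta> + 1) / (2 * \<theta> + 1)) *
              ((2 * \<theta> + 1) powr (2 * \<theta> + 1) /
               ((4 * \<theta>) powr \<theta> * (\<theta> + 1) powr (\<theta> + 1))) ^ n)) \<and>
         ((\<lambda>n::nat. E_prod n n) \<sim>[sequentially] (\<lambda>n. sqrt (4 / 3) * (27 / 16) ^ n))"
proof
  show "(\<lambda>n::nat. E_prod (nat \<lfloor>\<theta> * real n\<rfloor>) n)
          \<sim>[sequentially \<sqinter> principal {n. \<theta> * real n \<in> \<int>}]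
        (\<lambda>n. sqrt (2 * (\<theta> + 1) / (2 * \<theta> + 1)) *
             ((2 * \<theta> + 1) powr (2 * \<theta> + 1) /
              ((4 * \<theta>) powr \<theta> * (\<theta> + 1) powr (\<theta> + 1))) ^ n)"
    by (rule E_prod_asymp_equiv[OF assms])
  show "(\<lambda>n::nat. E_prod n n) \<sim>[sequentially] (\<lambda>n. sqrt (4 / 3) * (27 / 16) ^ n)"
    using E_prod_asymp_equiv[of 1] by simp
qed

end
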